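(* Consider two pairs of lines in the plane. (1) If one pair consists of parallel lines, then the rectangle locus for the pairs is a line, a line missing an open segment, a point, or the empty set. (2) The rectangle locus is the entire plane if and only if each pair consists of orthogonal lines and all four lines meet at the same point. (3) Suppose neither pair consists of parallel lines. If the crossing points of the two pairs are different and either both pairs consist of orthogonal lines or one pair is a translation of the other, then the rectangle locus is a line.
   Context: A pair of lines means two distinct lines; two pairs of lines are distinct pairs, possibly sharing one line. The rectangle locus of two pairs $L_1,L_3$ and $L_2,L_4$ is the set of points $p$ in the plane that are the center of a (possibly degenerate) rectangle one of whose diagonals joins $L_1$ and $L_3$ and the other joins $L_2$ and $L_4$; equivalently, $p$ is the midpoint both of a segment joining $L_1$ and $L_3$ and of a segment joining $L_2$ and $L_4$, these two segments having equal length. A pair is a translation of the other if it is its image under a translation of the plane. *)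

theory Defs
  imports "HOL-Analysis.Analysis"
begin

type_synonym point = "real^2"

definition line_through :: "point \<Rightarrow> point \<Rightarrow> point set" where
  "line_through p v = {p + t *\<^sub>R v | t. True}"

definition is_line :: "point set \<Rightarrow> bool" where
  "is_line L \<longleftrightarrow> (\<exists>p v. v \<noteq> 0 \<and> L = line_through p v)"

definition parallel_lines :: "point set \<Rightarrow> point set \<Rightarrow> bool" where
  "parallel_lines L M \<longleftrightarrow>
     (\<exists>p q v. v \<noteq> 0 \<and> L = line_through p v \<and> M = line_through q v)"

definition orthogonal_lines :: "point set \<Rightarrow> point set \<Rightarrow> bool" where
  "orthogonal_lines L M \<longleftrightarrow>
     (\<exists>p q v w. v \<noteq> 0 \<and> w \<noteq> 0 \<and> L = line_through p v \<and> M = line_through q w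
        \<and> inner v w = 0)"

definition rectangle_locus :: "point set \<Rightarrow> point set \<Rightarrow> point set \<Rightarrow> point set \<Rightarrow> point set" where
  "rectangle_locus L1 L3 L2 L4 =
     {p. \<exists>a c b d. a \<in> L1 \<and> c \<in> L3 \<and> b \<in> L2 \<and> d \<in> L4 \<and>
          midpoint a c = p \<and> midpoint b d = p \<and> dist a c = dist b d}"

definition translate_set :: "point \<Rightarrow> point set \<Rightarrow> point set" where
  "translate_set v L = (\<lambda>x. x + v) ` L"

end

theory Submission
  imports Defs "HOL-Library.Quadratic_Discriminant"
begin

text \<open>
  If two lines cross at \<open>z\<close> with directions \<open>e\<close>
  and \<open>f\<close>, every point \<open>p\<close> is the midpoint of exactly one chord between them, and its squared
  length is \<open>4 Q (p - z)\<close> for a positive definite quadratic form \<open>Q = chord_form e f\<close>. Between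
  two parallel lines, the midpoints of chords lie on the midline, and every length at least the
  distance of the lines is realised at every point of it.

  For two crossing pairs the locus is therefore \<open>{p. Q (p - z) = Q' (p - z')}\<close>. When \<open>Q = Q'\<close>
  (both pairs orthogonal, where \<open>Q\<close> is the squared norm, or one pair a translate of the other) the
  quadratic parts cancel and for \<open>z \<noteq> z'\<close> the locus is a line. The locus is the whole plane only if
  \<open>z = z'\<close> and \<open>Q = Q'\<close>; the zero lines of the cross term of \<open>Q\<close> are the lines of the pair, so
  distinct pairs force that term to vanish, i.e. both pairs to be orthogonal.

  If one pair is parallel, the locus lies on its midline: intersected with the midline of a
  second parallel pair it is a line, a point or empty; against a crossing pair the condition is
  \<open>a t\<^sup>2 + b t + c \<ge> 0\<close> with \<open>a > 0\<close> along the midline, which gives the whole line or the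
  line minus an open segment.
\<close>

definition cross2 :: "point \<Rightarrow> point \<Rightarrow> real" where
  "cross2 x y = x$1 * y$2 - x$2 * y$1"

lemma vec2_eq_iff: "(x::point) = y \<longleftrightarrow> x$1 = y$1 \<and> x$2 = y$2"
  by (simp add: vec_eq_iff forall_2)

lemma vec2_nonzero_iff: "(x::point) \<noteq> 0 \<longleftrightarrow> x$1 \<noteq> 0 \<or> x$2 \<noteq> 0"
  by (simp add: vec2_eq_iff)

lemma inner_vec2: "(x::point) \<bullet> y = x$1 * y$1 + x$2 * y$2"
  by (simp add: inner_vec_def sum_2)

lemma norm_vec2_power2: "(norm (x::point))\<^sup>2 = (x$1)\<^sup>2 + (x$2)\<^sup>2"
  unfolding power2_norm_eq_inner inner_vec2 by (simp add: power2_eq_square)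

lemma cross2_add_left: "cross2 (x + y) z = cross2 x z + cross2 y z"
  and cross2_diff_left: "cross2 (x - y) z = cross2 x z - cross2 y z"
  and cross2_scaleR_left: "cross2 (t *\<^sub>R x) z = t * cross2 x z"
  and cross2_add_right: "cross2 z (x + y) = cross2 z x + cross2 z y"
  and cross2_diff_right: "cross2 z (x - y) = cross2 z x - cross2 z y"
  and cross2_scaleR_right: "cross2 z (t *\<^sub>R x) = t * cross2 z x"
  by (simp_all add: cross2_def algebra_simps)

lemma cross2_minus_left: "cross2 (- x) y = - cross2 x y"
  and cross2_minus_right: "cross2 x (- y) = - cross2 x y"
  by (simp_all add: cross2_def)

lemmas cross2_bilinear = cross2_add_left cross2_diff_left cross2_scaleR_left
  cross2_add_right cross2_diff_right cross2_scaleR_right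

lemma cross2_commute: "cross2 y x = - cross2 x y"
  by (simp add: cross2_def)

lemma cross2_self [simp]: "cross2 x x = 0"
  by (simp add: cross2_def)

lemma cross2_eq_0_commute: "cross2 y x = 0 \<longleftrightarrow> cross2 x y = 0"
  using cross2_commute[of x y] by simp

lemma lagrange_identity2: "(norm x * norm y)\<^sup>2 = (x \<bullet> y)\<^sup>2 + (cross2 x y)\<^sup>2"
  unfolding power_mult_distrib norm_vec2_power2 inner_vec2 cross2_def
  by (simp add: power2_eq_square algebra_simps)

lemma cross2_eq_0_iff:
  assumes "v \<noteq> 0"
  shows "cross2 v w = 0 \<longleftrightarrow> (\<exists>t. w = t *\<^sub>R v)"
proof
  assume "cross2 v w = 0"
  have "(norm v)\<^sup>2 \<noteq> 0" using assms by simp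
  then have "w = ((v \<bullet> w) / (norm v)\<^sup>2) *\<^sub>R v"
    using \<open>cross2 v w = 0\<close> unfolding vec2_eq_iff norm_vec2_power2 inner_vec2 cross2_def
    by (auto simp: field_simps power2_eq_square)
  then show "\<exists>t. w = t *\<^sub>R v" ..
qed (auto simp: cross2_bilinear)

lemma cross2_eq_0_trans:
  assumes "u \<noteq> 0" "cross2 u v = 0" "cross2 u w = 0"
  shows "cross2 v w = 0"
  using assms by (auto simp: cross2_eq_0_iff cross2_bilinear)

lemma cross2_orthogonal_neq_0:
  assumes "v \<noteq> 0" "w \<noteq> 0" "v \<bullet> w = 0"
  shows "cross2 v w \<noteq> 0"
  using lagrange_identity2[of v w] assms by auto

lemma mem_line_through: "x \<in> line_through p v \<longleftrightarrow> (\<exists>t. x = p + t *\<^sub>R v)"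
  by (simp add: line_through_def)

lemma mem_line_through_iff:
  assumes "v \<noteq> 0"
  shows "x \<in> line_through p v \<longleftrightarrow> cross2 v (x - p) = 0"
proof -
  have "x \<in> line_through p v \<longleftrightarrow> (\<exists>t. x - p = t *\<^sub>R v)"
    unfolding mem_line_through by (metis add_diff_cancel_left' diff_add_cancel add.commute)
  then show ?thesis using cross2_eq_0_iff[OF assms] by simp
qed

lemma line_through_self [simp]: "p \<in> line_through p v"
  unfolding mem_line_through by (auto intro!: exI[of _ 0])

lemma is_line_line_through: "v \<noteq> 0 \<Longrightarrow> is_line (line_through p v)"
  unfolding is_line_def by blast

lemma line_through_rebase:
  assumes "x \<in> line_through p v"
  shows "line_through x v = line_through p v"
proof -
  obtain t where x: "x = p + t *\<^sub>R v" using assms unfolding mem_line_through by blast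
  have "x + s *\<^sub>R v = p + (t + s) *\<^sub>R v" "p + s *\<^sub>R v = x + (s - t) *\<^sub>R v" for s
    unfolding x by (simp_all add: algebra_simps)
  then show ?thesis unfolding set_eq_iff mem_line_through by metis
qed

lemma line_through_eq_iff:
  assumes "v \<noteq> 0" "w \<noteq> 0"
  shows "line_through z v = line_through z w \<longleftrightarrow> cross2 v w = 0"
proof
  assume "line_through z v = line_through z w"
  moreover have "z + w \<in> line_through z w"
    unfolding line_through_def by (auto intro!: exI[of _ 1])
  ultimately have "z + w \<in> line_through z v" by simp
  then show "cross2 v w = 0" using mem_line_through_iff[OF assms(1)] by simp
next
  assume "cross2 v w = 0"
  then have "cross2 v (x - z) = 0 \<longleftrightarrow> cross2 w (x - z) = 0" for x
    using cross2_eq_0_trans[OF assms(1), of w "x - z"] cross2_eq_0_trans[OF assms(2), of v "x - z"]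
      cross2_eq_0_commute[of v w] by auto
  then show "line_through z v = line_through z w"
    by (simp add: set_eq_iff mem_line_through_iff assms)
qed

lemma line_through_two_points:
  assumes "is_line L" "x \<in> L" "y \<in> L" "x \<noteq> y"
  shows "L = line_through x (y - x)"
proof -
  obtain v where v: "v \<noteq> 0" and L: "L = line_through x v"
    using assms(1,2) line_through_rebase unfolding is_line_def by metis
  then have "cross2 v (y - x) = 0" using assms(3) mem_line_through_iff by blast
  then show ?thesis using L v line_through_eq_iff assms(4) by simp
qed

lemma line_Int_line_cases:
  assumes "is_line L" "is_line M"
  shows "is_line (L \<inter> M) \<or> (\<exists>x. L \<inter> M = {x}) \<or> L \<inter> M = {}"
proof (cases "\<exists>x y. x \<in> L \<inter> M \<and> y \<in> L \<inter> M \<and> x \<noteq> y")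
  case True
  then obtain x y where xy: "x \<in> L" "x \<in> M" "y \<in> L" "y \<in> M" "x \<noteq> y" by blast
  have "L = line_through x (y - x)" by (rule line_through_two_points[OF assms(1) xy(1,3,5)])
  moreover have "M = line_through x (y - x)" by (rule line_through_two_points[OF assms(2) xy(2,4,5)])
  ultimately show ?thesis using assms(1) by simp
qed blast

lemma line_neq_UNIV:
  assumes "is_line L"
  shows "L \<noteq> UNIV"
proof
  obtain p v where v: "v \<noteq> 0" and L: "L = line_through p v"
    using assms unfolding is_line_def by blast
  define q where "q = p + vector [- v$2, v$1]"
  have "cross2 v (q - p) = (norm v)\<^sup>2"
    unfolding q_def norm_vec2_power2 by (simp add: cross2_def power2_eq_square)
  moreover assume "L = UNIV"
  then have "cross2 v (q - p) = 0" using L mem_line_through_iff[OF v] by blast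
  ultimately show False using v by simp
qed

lemma line_through_meet:
  assumes "cross2 e f \<noteq> 0"
  obtains z where "z \<in> line_through p e" "z \<in> line_through q f"
proof
  define z where "z = p + (cross2 (q - p) f / cross2 e f) *\<^sub>R e"
  show "z \<in> line_through p e" unfolding z_def line_through_def by blast
  have "f \<noteq> 0" using assms by (auto simp: cross2_def)
  moreover have "cross2 f (z - q) = 0"
    unfolding z_def using assms by (simp add: cross2_def field_simps)
  ultimately show "z \<in> line_through q f" using mem_line_through_iff by blast
qed

lemma crossing_lines_common_point:
  assumes "is_line L" "is_line L'" "\<not> parallel_lines L L'"
  obtains z e f where "cross2 e f \<noteq> 0" "L = line_through z e" "L' = line_through z f"
proof -
  obtain p e q f where e: "e \<noteq> 0" "L = line_through p e" and f: "f \<noteq> 0" "L' = line_through q f"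
    using assms(1,2) unfolding is_line_def by blast
  have ef: "cross2 e f \<noteq> 0"
  proof
    assume "cross2 e f = 0"
    then have "L' = line_through q e"
      using line_through_eq_iff[OF f(1) e(1)] cross2_eq_0_commute f(2) by simp
    then show False using assms(3) e unfolding parallel_lines_def by blast
  qed
  obtain z where "z \<in> line_through p e" "z \<in> line_through q f"
    using line_through_meet[OF ef] .
  then have "L = line_through z e" "L' = line_through z f"
    using e(2) f(2) line_through_rebase by simp_all
  then show thesis using that ef by blast
qed

lemma line_through_Int_crossing:
  assumes "cross2 e f \<noteq> 0"
  shows "line_through z e \<inter> line_through z f = {z}"
proof -
  have ef: "e \<noteq> 0" "f \<noteq> 0" using assms by (auto simp: cross2_def)
  have "x = z" if "cross2 e (x - z) = 0" "cross2 f (x - z) = 0" for x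
  proof (rule ccontr)
    assume "x \<noteq> z"
    moreover have "cross2 (x - z) e = 0" "cross2 (x - z) f = 0"
      using that cross2_eq_0_commute by simp_all
    ultimately show False using cross2_eq_0_trans[of "x - z" e f] assms by simp
  qed
  then show ?thesis using mem_line_through_iff[OF ef(1)] mem_line_through_iff[OF ef(2)] by auto
qed

lemma is_line_linear_equation:
  assumes "\<alpha> \<noteq> 0 \<or> \<beta> \<noteq> 0"
  shows "is_line {p::point. \<alpha> * p$1 + \<beta> * p$2 = \<gamma>}"
proof -
  define v :: point where "v = vector [- \<beta>, \<alpha>]"
  have v: "v \<noteq> 0" unfolding v_def vec2_nonzero_iff using assms by auto
  obtain q :: point where q: "\<alpha> * q$1 + \<beta> * q$2 = \<gamma>"
  proof (cases "\<alpha> = 0")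
    case True
    then show thesis using assms that[of "vector [0, \<gamma> / \<beta>]"] by simp
  next
    case False
    then show thesis using that[of "vector [\<gamma> / \<alpha>, 0]"] by simp
  qed
  then have "cross2 v (p - q) = 0 \<longleftrightarrow> \<alpha> * p$1 + \<beta> * p$2 = \<gamma>" for p
    unfolding cross2_def v_def by (auto simp: algebra_simps)
  then have "{p. \<alpha> * p$1 + \<beta> * p$2 = \<gamma>} = line_through q v"
    using mem_line_through_iff[OF v] by auto
  then show ?thesis unfolding is_line_def using v by blast
qed

lemma translate_set_line_through: "translate_set u (line_through p v) = line_through (p + u) v"
  unfolding translate_set_def line_through_def by (auto simp: algebra_simps image_iff)

lemma orthogonal_lines_through:
  assumes "orthogonal_lines L L'" "x \<in> L" "x \<in> L'"
  obtains v w where "v \<noteq> 0" "w \<noteq> 0" "v \<bullet> w = 0" "L = line_through x v" "L' = line_through x w"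
proof -
  obtain p q v w where "v \<noteq> 0" "w \<noteq> 0" "v \<bullet> w = 0" "L = line_through p v" "L' = line_through q w"
    using assms(1) unfolding orthogonal_lines_def by blast
  with assms(2,3) show thesis using that line_through_rebase by metis
qed

lemma orthogonal_lines_crossing:
  assumes "orthogonal_lines L L'"
  obtains z v w where "v \<bullet> w = 0" "cross2 v w \<noteq> 0" "L = line_through z v" "L' = line_through z w"
proof -
  obtain p q v w where vw: "v \<noteq> 0" "w \<noteq> 0" "v \<bullet> w = 0" "L = line_through p v" "L' = line_through q w"
    using assms unfolding orthogonal_lines_def by blast
  have vw_cross: "cross2 v w \<noteq> 0" using cross2_orthogonal_neq_0[OF vw(1-3)] .
  obtain z where "z \<in> line_through p v" "z \<in> line_through q w"
    using line_through_meet[OF vw_cross] .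
  then have "L = line_through z v" "L' = line_through z w"
    using vw(4,5) line_through_rebase by simp_all
  then show thesis using that vw(3) vw_cross by blast
qed

definition has_chord :: "point set \<Rightarrow> point set \<Rightarrow> point \<Rightarrow> real \<Rightarrow> bool" where
  "has_chord L L' p h \<longleftrightarrow> (\<exists>a c. a \<in> L \<and> c \<in> L' \<and> midpoint a c = p \<and> dist a c = h)"

lemma rectangle_locus_has_chord:
  "rectangle_locus L1 L3 L2 L4 = {p. \<exists>h. has_chord L1 L3 p h \<and> has_chord L2 L4 p h}"
  unfolding rectangle_locus_def has_chord_def by blast

lemma has_chord_commute: "has_chord L' L p h = has_chord L L' p h"
  unfolding has_chord_def by (metis midpoint_sym dist_commute)

lemma rectangle_locus_swap_pairs: "rectangle_locus L1 L3 L2 L4 = rectangle_locus L2 L4 L1 L3"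
  unfolding rectangle_locus_has_chord by blast

lemma rectangle_locus_swap_second: "rectangle_locus L1 L3 L2 L4 = rectangle_locus L1 L3 L4 L2"
  unfolding rectangle_locus_has_chord has_chord_commute[of L2 L4] ..

text \<open>The chord \<open>[s *\<^sub>R e, r *\<^sub>R f]\<close> with midpoint \<open>x\<close> has
  \<open>(s, r) = 2 (cross2 x f, cross2 e x) / cross2 e f\<close>; substituting into its squared length
  \<open>|s e - r f|\<^sup>2 = |s e + r f|\<^sup>2 - 4 s r (e \<bullet> f)\<close> gives \<open>4 * chord_form e f x\<close>.\<close>
definition chord_form :: "point \<Rightarrow> point \<Rightarrow> point \<Rightarrow> real" where
  "chord_form e f x = (norm x)\<^sup>2 - 4 * (e \<bullet> f) / (cross2 e f)\<^sup>2 * (cross2 x f * cross2 e x)"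

lemma cross2_decomposition: "cross2 e f *\<^sub>R x = cross2 x f *\<^sub>R e + cross2 e x *\<^sub>R f"
  by (simp add: vec2_eq_iff cross2_def algebra_simps)

lemma chord_form_0 [simp]: "chord_form e f 0 = 0"
  by (simp add: chord_form_def cross2_def)

lemma midpoint_scaleR_exists:
  assumes "cross2 e f \<noteq> 0"
  shows "\<exists>s r. midpoint (s *\<^sub>R e) (r *\<^sub>R f) = x"
proof -
  have "midpoint ((2 * cross2 x f / cross2 e f) *\<^sub>R e) ((2 * cross2 e x / cross2 e f) *\<^sub>R f)
      = (1 / cross2 e f) *\<^sub>R (cross2 x f *\<^sub>R e + cross2 e x *\<^sub>R f)"
    by (simp add: midpoint_def scaleR_add_right)
  also have "\<dots> = x"
    unfolding cross2_decomposition[symmetric] using assms by simp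
  finally show ?thesis by blast
qed

lemma chord_form_midpoint:
  assumes "cross2 e f \<noteq> 0"
  shows "4 * chord_form e f (midpoint (s *\<^sub>R e) (r *\<^sub>R f)) = (dist (s *\<^sub>R e) (r *\<^sub>R f))\<^sup>2"
proof -
  let ?x = "midpoint (s *\<^sub>R e) (r *\<^sub>R f)"
  have cr: "cross2 ?x f = s * cross2 e f / 2" "cross2 e ?x = r * cross2 e f / 2"
    by (simp_all add: midpoint_def cross2_def algebra_simps)
  have "4 * (e \<bullet> f) / (cross2 e f)\<^sup>2 * (cross2 ?x f * cross2 e ?x) = (e \<bullet> f) * s * r"
    unfolding cr using assms by (simp add: power2_eq_square field_simps)
  then have "4 * chord_form e f ?x = 4 * (norm ?x)\<^sup>2 - 4 * ((e \<bullet> f) * s * r)"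
    unfolding chord_form_def by simp
  also have "4 * (norm ?x)\<^sup>2 = (norm (s *\<^sub>R e + r *\<^sub>R f))\<^sup>2"
    by (simp add: midpoint_def power_mult_distrib power2_eq_square)
  also have "\<dots> = (norm (s *\<^sub>R e - r *\<^sub>R f))\<^sup>2 + 4 * ((e \<bullet> f) * s * r)"
    by (simp add: power2_norm_eq_inner inner_add_left inner_add_right inner_diff_left
        inner_diff_right inner_commute[of f e] algebra_simps)
  finally show ?thesis by (simp add: dist_norm)
qed

lemma has_chord_crossing_iff:
  assumes "cross2 e f \<noteq> 0"
  shows "has_chord (line_through z e) (line_through z f) p h \<longleftrightarrow>
    h \<ge> 0 \<and> h\<^sup>2 = 4 * chord_form e f (p - z)"
proof -
  have mid: "midpoint (z + a) (z + c) = p \<longleftrightarrow> midpoint a c = p - z" for a c :: point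
    by (auto simp: vec2_eq_iff midpoint_def field_simps)
  have "has_chord (line_through z e) (line_through z f) p h \<longleftrightarrow>
      (\<exists>s r. midpoint (z + s *\<^sub>R e) (z + r *\<^sub>R f) = p \<and> dist (z + s *\<^sub>R e) (z + r *\<^sub>R f) = h)"
    unfolding has_chord_def mem_line_through by blast
  also have "\<dots> \<longleftrightarrow>
      (\<exists>s r. midpoint (s *\<^sub>R e) (r *\<^sub>R f) = p - z \<and> dist (s *\<^sub>R e) (r *\<^sub>R f) = h)"
    by (simp only: mid dist_add_cancel)
  also have "\<dots> \<longleftrightarrow> h \<ge> 0 \<and> h\<^sup>2 = 4 * chord_form e f (p - z)"
  proof
    assume "\<exists>s r. midpoint (s *\<^sub>R e) (r *\<^sub>R f) = p - z \<and> dist (s *\<^sub>R e) (r *\<^sub>R f) = h"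
    then obtain s r where "midpoint (s *\<^sub>R e) (r *\<^sub>R f) = p - z" "dist (s *\<^sub>R e) (r *\<^sub>R f) = h"
      by blast
    then show "h \<ge> 0 \<and> h\<^sup>2 = 4 * chord_form e f (p - z)"
      using chord_form_midpoint[OF assms, of s r] by auto
  next
    assume h: "h \<ge> 0 \<and> h\<^sup>2 = 4 * chord_form e f (p - z)"
    obtain s r where sr: "midpoint (s *\<^sub>R e) (r *\<^sub>R f) = p - z"
      using midpoint_scaleR_exists[OF assms] by blast
    then have "(dist (s *\<^sub>R e) (r *\<^sub>R f))\<^sup>2 = h\<^sup>2"
      using chord_form_midpoint[OF assms, of s r] h by simp
    then have "dist (s *\<^sub>R e) (r *\<^sub>R f) = h" using h by (metis power2_eq_iff_nonneg zero_le_dist)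
    then show "\<exists>s r. midpoint (s *\<^sub>R e) (r *\<^sub>R f) = p - z \<and> dist (s *\<^sub>R e) (r *\<^sub>R f) = h"
      using sr by blast
  qed
  finally show ?thesis .
qed

lemma chord_form_nonneg:
  assumes "cross2 e f \<noteq> 0"
  shows "0 \<le> chord_form e f x"
proof -
  obtain s r where "midpoint (s *\<^sub>R e) (r *\<^sub>R f) = x"
    using midpoint_scaleR_exists[OF assms] by blast
  then have "4 * chord_form e f x = (dist (s *\<^sub>R e) (r *\<^sub>R f))\<^sup>2"
    using chord_form_midpoint[OF assms] by blast
  then show ?thesis using zero_le_power2[of "dist (s *\<^sub>R e) (r *\<^sub>R f)"] by linarith
qed

lemma chord_form_eq_0_iff:
  assumes "cross2 e f \<noteq> 0"
  shows "chord_form e f x = 0 \<longleftrightarrow> x = 0"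
proof
  assume "chord_form e f x = 0"
  obtain s r where x: "midpoint (s *\<^sub>R e) (r *\<^sub>R f) = x"
    using midpoint_scaleR_exists[OF assms] by blast
  then have "dist (s *\<^sub>R e) (r *\<^sub>R f) = 0"
    using chord_form_midpoint[OF assms, of s r] \<open>chord_form e f x = 0\<close> by simp
  then have "s *\<^sub>R e = r *\<^sub>R f" by simp
  then have "s * cross2 e f = cross2 (r *\<^sub>R f) f" and "r * cross2 e f = cross2 e (s *\<^sub>R e)"
    by (metis cross2_scaleR_left, metis cross2_scaleR_right)
  then have "s * cross2 e f = 0" "r * cross2 e f = 0"
    by (simp_all add: cross2_bilinear)
  then show "x = 0" using assms x by simp
qed simp

lemma chord_form_orthogonal: "e \<bullet> f = 0 \<Longrightarrow> chord_form e f x = (norm x)\<^sup>2"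
  by (simp add: chord_form_def)

lemma chord_form_minus [simp]: "chord_form e f (- x) = chord_form e f x"
  unfolding chord_form_def by (simp add: cross2_minus_left cross2_minus_right)

lemma chord_form_add_scaleR:
  "chord_form e f (y + t *\<^sub>R v) = chord_form e f y
     + t * (chord_form e f (y + v) - chord_form e f y - chord_form e f v) + t\<^sup>2 * chord_form e f v"
proof -
  define c where "c = 4 * (e \<bullet> f) / (cross2 e f)\<^sup>2"
  have Q: "chord_form e f y = (norm y)\<^sup>2 - c * (cross2 y f * cross2 e y)" for y
    unfolding chord_form_def c_def ..
  show ?thesis
    unfolding Q power2_norm_eq_inner cross2_bilinear
    by (simp add: inner_add_left inner_add_right inner_commute[of v y] algebra_simps power2_eq_square)
qed

lemma chord_form_polar_linear:
  "\<exists>\<alpha> \<beta>. \<forall>x. chord_form e f (x + d) - chord_form e f x - chord_form e f d = \<alpha> * x$1 + \<beta> * x$2"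
proof -
  define c where "c = 4 * (e \<bullet> f) / (cross2 e f)\<^sup>2"
  have Q: "chord_form e f y = (norm y)\<^sup>2 - c * (cross2 y f * cross2 e y)" for y
    unfolding chord_form_def c_def ..
  have polar: "chord_form e f (x + d) - chord_form e f x - chord_form e f d =
      2 * (x \<bullet> d) - c * (cross2 x f * cross2 e d + cross2 d f * cross2 e x)" for x
    unfolding Q power2_norm_eq_inner cross2_bilinear
    by (simp add: inner_add_left inner_add_right inner_commute[of d x] algebra_simps)
  have coordinates: "2 * (x \<bullet> d) - c * (cross2 x f * cross2 e d + cross2 d f * cross2 e x) =
      (2 * d$1 - c * (f$2 * cross2 e d - e$2 * cross2 d f)) * x$1
      + (2 * d$2 + c * (f$1 * cross2 e d - e$1 * cross2 d f)) * x$2" for x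
    by (simp add: inner_vec2 cross2_def algebra_simps)
  show ?thesis unfolding polar coordinates by blast
qed

lemma chord_form_bisector_is_line:
  assumes "cross2 e f \<noteq> 0" "z \<noteq> z'"
  shows "is_line {p. chord_form e f (p - z) = chord_form e f (p - z')}"
proof -
  define d where "d = z - z'"
  obtain \<alpha> \<beta> where polar:
      "\<And>x. chord_form e f (x + d) - chord_form e f x - chord_form e f d = \<alpha> * x$1 + \<beta> * x$2"
    using chord_form_polar_linear by blast
  have "\<alpha> \<noteq> 0 \<or> \<beta> \<noteq> 0"
  proof (rule ccontr)
    assume "\<not> (\<alpha> \<noteq> 0 \<or> \<beta> \<noteq> 0)"
    then have "chord_form e f (- d + d) - chord_form e f (- d) - chord_form e f d = 0"
      using polar[of "- d"] by simp
    then have "chord_form e f d = 0" by simp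
    then show False using chord_form_eq_0_iff[OF assms(1)] assms(2) d_def by simp
  qed
  moreover have "chord_form e f (p - z) = chord_form e f (p - z') \<longleftrightarrow>
      \<alpha> * p$1 + \<beta> * p$2 = \<alpha> * z$1 + \<beta> * z$2 - chord_form e f d" for p
  proof -
    have "p - z + d = p - z'" by (simp add: d_def)
    then have "chord_form e f (p - z') - chord_form e f (p - z) - chord_form e f d =
        \<alpha> * p$1 + \<beta> * p$2 - (\<alpha> * z$1 + \<beta> * z$2)"
      using polar[of "p - z"] unfolding \<open>p - z + d = p - z'\<close> by (simp add: right_diff_distrib)
    then show ?thesis by linarith
  qed
  ultimately show ?thesis using is_line_linear_equation by simp
qed

lemma rectangle_locus_crossing:
  assumes "cross2 e f \<noteq> 0" "cross2 e' f' \<noteq> 0"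
  shows "rectangle_locus (line_through z e) (line_through z f) (line_through z' e') (line_through z' f')
    = {p. chord_form e f (p - z) = chord_form e' f' (p - z')}"
proof -
  have "(\<exists>h. h \<ge> 0 \<and> h\<^sup>2 = 4 * chord_form e f (p - z) \<and> h\<^sup>2 = 4 * chord_form e' f' (p - z'))
      \<longleftrightarrow> chord_form e f (p - z) = chord_form e' f' (p - z')" for p
  proof
    assume "chord_form e f (p - z) = chord_form e' f' (p - z')"
    moreover have "(sqrt (4 * chord_form e f (p - z)))\<^sup>2 = 4 * chord_form e f (p - z)"
      using chord_form_nonneg[OF assms(1)] by simp
    ultimately show "\<exists>h. h \<ge> 0 \<and> h\<^sup>2 = 4 * chord_form e f (p - z) \<and> h\<^sup>2 = 4 * chord_form e' f' (p - z')"
      by (metis real_sqrt_ge_zero zero_le_power2)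
  qed auto
  then show ?thesis
    unfolding rectangle_locus_has_chord has_chord_crossing_iff[OF assms(1)]
      has_chord_crossing_iff[OF assms(2)] by blast
qed

lemma exists_norm_add_scaleR_eq_iff:
  assumes "v \<noteq> 0"
  shows "(\<exists>t. norm (w + t *\<^sub>R v) = h) \<longleftrightarrow> h \<ge> 0 \<and> (cross2 v w)\<^sup>2 \<le> (h * norm v)\<^sup>2"
proof
  assume "\<exists>t. norm (w + t *\<^sub>R v) = h"
  then obtain t where t: "norm (w + t *\<^sub>R v) = h" ..
  have "cross2 (w + t *\<^sub>R v) v = - cross2 v w"
    by (simp add: cross2_bilinear cross2_commute[of v w])
  then have "(h * norm v)\<^sup>2 = ((w + t *\<^sub>R v) \<bullet> v)\<^sup>2 + (cross2 v w)\<^sup>2"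
    using lagrange_identity2[of "w + t *\<^sub>R v" v] t by simp
  then show "h \<ge> 0 \<and> (cross2 v w)\<^sup>2 \<le> (h * norm v)\<^sup>2"
    using t by auto
next
  assume h: "h \<ge> 0 \<and> (cross2 v w)\<^sup>2 \<le> (h * norm v)\<^sup>2"
  define a b c where "a = (norm v)\<^sup>2" and "b = 2 * (w \<bullet> v)" and "c = (norm w)\<^sup>2 - h\<^sup>2"
  have "discrim a b c = 4 * ((h * norm v)\<^sup>2 - (cross2 w v)\<^sup>2)"
    using lagrange_identity2[of w v]
    unfolding discrim_def a_def b_def c_def by (simp add: power_mult_distrib algebra_simps)
  then have "discrim a b c \<ge> 0" using h cross2_commute[of v w] by simp
  moreover have "a \<noteq> 0" using assms by (simp add: a_def)
  ultimately obtain t where t: "a * t\<^sup>2 + b * t + c = 0"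
    using discriminant_nonneg_ex by blast
  have "(norm (w + t *\<^sub>R v))\<^sup>2 = a * t\<^sup>2 + b * t + (norm w)\<^sup>2"
    unfolding a_def b_def power2_norm_eq_inner
    by (simp add: inner_add_left inner_add_right inner_commute[of v w] algebra_simps power2_eq_square)
  then have "(norm (w + t *\<^sub>R v))\<^sup>2 = h\<^sup>2" using t by (simp add: c_def)
  then show "\<exists>t. norm (w + t *\<^sub>R v) = h"
    using h by (metis power2_eq_iff_nonneg norm_ge_zero)
qed

lemma has_chord_parallel_iff:
  assumes "v \<noteq> 0"
  shows "has_chord (line_through P v) (line_through Q v) p h \<longleftrightarrow>
    p \<in> line_through (midpoint P Q) v \<and> h \<ge> 0 \<and> (cross2 v (P - Q))\<^sup>2 \<le> (h * norm v)\<^sup>2"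
proof -
  have mid: "midpoint (P + s *\<^sub>R v) (Q + r *\<^sub>R v) = midpoint P Q + ((s + r) / 2) *\<^sub>R v" for s r
    by (simp add: vec2_eq_iff midpoint_def field_simps)
  have diff: "dist (P + s *\<^sub>R v) (Q + r *\<^sub>R v) = norm ((P - Q) + (s - r) *\<^sub>R v)" for s r
    by (simp add: dist_norm algebra_simps)
  have "has_chord (line_through P v) (line_through Q v) p h \<longleftrightarrow>
      (\<exists>s r. midpoint (P + s *\<^sub>R v) (Q + r *\<^sub>R v) = p \<and> dist (P + s *\<^sub>R v) (Q + r *\<^sub>R v) = h)"
    unfolding has_chord_def mem_line_through by blast
  also have "\<dots> \<longleftrightarrow>
      (\<exists>s r. midpoint P Q + ((s + r) / 2) *\<^sub>R v = p \<and> norm ((P - Q) + (s - r) *\<^sub>R v) = h)"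
    by (simp only: mid diff)
  also have "\<dots> \<longleftrightarrow> (\<exists>\<sigma>. midpoint P Q + \<sigma> *\<^sub>R v = p) \<and> (\<exists>\<tau>. norm ((P - Q) + \<tau> *\<^sub>R v) = h)"
  proof
    assume "\<exists>s r. midpoint P Q + ((s + r) / 2) *\<^sub>R v = p \<and> norm ((P - Q) + (s - r) *\<^sub>R v) = h"
    then show "(\<exists>\<sigma>. midpoint P Q + \<sigma> *\<^sub>R v = p) \<and> (\<exists>\<tau>. norm ((P - Q) + \<tau> *\<^sub>R v) = h)"
      by blast
  next
    assume "(\<exists>\<sigma>. midpoint P Q + \<sigma> *\<^sub>R v = p) \<and> (\<exists>\<tau>. norm ((P - Q) + \<tau> *\<^sub>R v) = h)"
    then obtain \<sigma> \<tau> where "midpoint P Q + \<sigma> *\<^sub>R v = p" "norm ((P - Q) + \<tau> *\<^sub>R v) = h"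
      by blast
    moreover have "((\<sigma> + \<tau> / 2) + (\<sigma> - \<tau> / 2)) / 2 = \<sigma>" "(\<sigma> + \<tau> / 2) - (\<sigma> - \<tau> / 2) = \<tau>"
      by simp_all
    ultimately show "\<exists>s r. midpoint P Q + ((s + r) / 2) *\<^sub>R v = p \<and> norm ((P - Q) + (s - r) *\<^sub>R v) = h"
      by (intro exI[of _ "\<sigma> + \<tau> / 2"] exI[of _ "\<sigma> - \<tau> / 2"]) simp
  qed
  finally show ?thesis
    unfolding exists_norm_add_scaleR_eq_iff[OF assms] mem_line_through by blast
qed

lemma rectangle_locus_parallel_subset:
  assumes "v \<noteq> 0"
  shows "rectangle_locus (line_through P v) (line_through Q v) L2 L4 \<subseteq> line_through (midpoint P Q) v"
  using has_chord_parallel_iff[OF assms] unfolding rectangle_locus_has_chord by blast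

lemma rectangle_locus_parallel_parallel:
  assumes "v \<noteq> 0" "w \<noteq> 0"
  shows "rectangle_locus (line_through P v) (line_through Q v) (line_through P' w) (line_through Q' w)
    = line_through (midpoint P Q) v \<inter> line_through (midpoint P' Q') w"
proof
  show "rectangle_locus (line_through P v) (line_through Q v) (line_through P' w) (line_through Q' w)
      \<subseteq> line_through (midpoint P Q) v \<inter> line_through (midpoint P' Q') w"
    using rectangle_locus_parallel_subset[OF assms(1)] rectangle_locus_parallel_subset[OF assms(2)]
      rectangle_locus_swap_pairs[of "line_through P v" "line_through Q v" "line_through P' w" "line_through Q' w"]
    by blast
next
  define c c' where "c = cross2 v (P - Q)" and "c' = cross2 w (P' - Q')"
  define h where "h = \<bar>c\<bar> / norm v + \<bar>c'\<bar> / norm w"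
  have "\<bar>c\<bar> \<le> h * norm v" "\<bar>c'\<bar> \<le> h * norm w"
    using assms by (simp_all add: h_def field_simps)
  then have "c\<^sup>2 \<le> (h * norm v)\<^sup>2" "c'\<^sup>2 \<le> (h * norm w)\<^sup>2"
    by (metis abs_ge_zero power2_abs power_mono)+
  moreover have "h \<ge> 0" by (simp add: h_def)
  ultimately show "line_through (midpoint P Q) v \<inter> line_through (midpoint P' Q') w \<subseteq>
      rectangle_locus (line_through P v) (line_through Q v) (line_through P' w) (line_through Q' w)"
    unfolding rectangle_locus_has_chord has_chord_parallel_iff[OF assms(1)]
      has_chord_parallel_iff[OF assms(2)] c_def c'_def by blast
qed

lemma quadratic_nonneg_set:
  fixes a b c :: real
  assumes "a > 0"
  shows "{t. 0 \<le> a * t\<^sup>2 + b * t + c} = UNIV \<or>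
    (\<exists>t1 t2. t1 < t2 \<and> {t. 0 \<le> a * t\<^sup>2 + b * t + c} = - {t1<..<t2})"
proof -
  have "4 * a * (a * t\<^sup>2 + b * t + c) = (2 * a * t + b)\<^sup>2 - discrim a b c" for t
    by (simp add: discrim_def power2_eq_square algebra_simps)
  moreover have "0 \<le> a * t\<^sup>2 + b * t + c \<longleftrightarrow> 0 \<le> 4 * a * (a * t\<^sup>2 + b * t + c)" for t
    using assms by (simp add: zero_le_mult_iff)
  ultimately have nonneg_iff: "0 \<le> a * t\<^sup>2 + b * t + c \<longleftrightarrow> discrim a b c \<le> (2 * a * t + b)\<^sup>2" for t
    by simp
  show ?thesis
  proof (cases "discrim a b c > 0")
    case False
    then have "discrim a b c \<le> (2 * a * t + b)\<^sup>2" for t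
      using zero_le_power2[of "2 * a * t + b"] by linarith
    then show ?thesis using nonneg_iff by blast
  next
    case True
    define R where "R = sqrt (discrim a b c)"
    have R: "R > 0" "R\<^sup>2 = discrim a b c" using True by (simp_all add: R_def)
    define t1 t2 where "t1 = (- b - R) / (2 * a)" and "t2 = (- b + R) / (2 * a)"
    have "t1 < t2" using R assms by (simp add: t1_def t2_def divide_strict_right_mono)
    moreover have "0 \<le> a * t\<^sup>2 + b * t + c \<longleftrightarrow> t \<in> - {t1<..<t2}" for t
    proof -
      have "t1 < t \<longleftrightarrow> - b - R < t * (2 * a)" "t < t2 \<longleftrightarrow> t * (2 * a) < - b + R"
        unfolding t1_def t2_def using assms by (simp_all add: pos_divide_less_eq pos_less_divide_eq)
      then have "t1 < t \<and> t < t2 \<longleftrightarrow> \<bar>2 * a * t + b\<bar> < R"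
        by (auto simp: abs_less_iff algebra_simps)
      also have "\<dots> \<longleftrightarrow> (2 * a * t + b)\<^sup>2 < R\<^sup>2"
        using R(1) abs_le_square_iff[of R "2 * a * t + b"] by (metis abs_of_pos not_le)
      also have "\<dots> \<longleftrightarrow> (2 * a * t + b)\<^sup>2 < discrim a b c" by (simp only: R(2))
      finally show ?thesis using nonneg_iff[of t] by (simp add: not_less)
    qed
    ultimately show ?thesis by blast
  qed
qed

lemma line_through_minus_open_segment:
  assumes "v \<noteq> 0" "t1 < t2"
  shows "(\<lambda>t. m + t *\<^sub>R v) ` (- {t1<..<t2}) =
    line_through m v - open_segment (m + t1 *\<^sub>R v) (m + t2 *\<^sub>R v)"
proof -
  have inj_scale: "inj (\<lambda>t::real. t *\<^sub>R v)" using assms(1) by (simp add: inj_on_def)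
  then have inj: "inj (\<lambda>t. m + t *\<^sub>R v)" by (simp add: inj_on_def)
  have "open_segment (t1 *\<^sub>R v) (t2 *\<^sub>R v) = (\<lambda>t. t *\<^sub>R v) ` open_segment t1 t2"
    using open_segment_linear_image[OF bounded_linear.linear[OF bounded_linear_scaleR_left] inj_scale] .
  then have "open_segment (m + t1 *\<^sub>R v) (m + t2 *\<^sub>R v) = (\<lambda>t. m + t *\<^sub>R v) ` {t1<..<t2}"
    using assms(2) by (simp add: open_segment_translation open_segment_eq_real_ivl image_image)
  moreover have "line_through m v = range (\<lambda>t. m + t *\<^sub>R v)"
    by (auto simp: line_through_def)
  ultimately show ?thesis
    using inj by (simp add: Compl_eq_Diff_UNIV image_set_diff)
qed

abbreviation is_line_minus_segment :: "point set \<Rightarrow> bool" where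
  "is_line_minus_segment S \<equiv> \<exists>L a b. is_line L \<and> a \<in> L \<and> b \<in> L \<and> a \<noteq> b \<and> S = L - open_segment a b"

lemma quadratic_image_line_cases:
  fixes m v :: point and a b c :: real
  assumes "v \<noteq> 0" "a > 0"
  defines "S \<equiv> (\<lambda>t. m + t *\<^sub>R v) ` {t. 0 \<le> a * t\<^sup>2 + b * t + c}"
  shows "is_line S \<or> is_line_minus_segment S"
  using quadratic_nonneg_set[OF assms(2), of b c]
proof
  assume "{t. 0 \<le> a * t\<^sup>2 + b * t + c} = UNIV"
  then have "S = line_through m v" by (auto simp: S_def line_through_def)
  then show ?thesis using is_line_line_through[OF assms(1)] by simp
next
  assume "\<exists>t1 t2. t1 < t2 \<and> {t. 0 \<le> a * t\<^sup>2 + b * t + c} = - {t1<..<t2}"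
  then obtain t1 t2 where t12: "t1 < t2" "{t. 0 \<le> a * t\<^sup>2 + b * t + c} = - {t1<..<t2}"
    by blast
  then have "S = line_through m v - open_segment (m + t1 *\<^sub>R v) (m + t2 *\<^sub>R v)"
    unfolding S_def using line_through_minus_open_segment[OF assms(1)] by simp
  moreover have "m + t1 *\<^sub>R v \<in> line_through m v" "m + t2 *\<^sub>R v \<in> line_through m v"
    by (auto simp: line_through_def)
  moreover have "m + t1 *\<^sub>R v \<noteq> m + t2 *\<^sub>R v" using assms(1) t12(1) by simp
  ultimately show ?thesis using is_line_line_through[OF assms(1)] by (intro disjI2 exI conjI)
qed

lemma rectangle_locus_parallel_crossing_eq:
  assumes "v \<noteq> 0" "cross2 e f \<noteq> 0"
  shows "rectangle_locus (line_through P v) (line_through Q v) (line_through z e) (line_through z f)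
    = {p \<in> line_through (midpoint P Q) v. (cross2 v (P - Q))\<^sup>2 \<le> 4 * chord_form e f (p - z) * (norm v)\<^sup>2}"
proof -
  let ?q = "chord_form e f" and ?k = "cross2 v (P - Q)"
  have "(\<exists>h. h \<ge> 0 \<and> ?k\<^sup>2 \<le> (h * norm v)\<^sup>2 \<and> h\<^sup>2 = 4 * ?q (p - z))
      \<longleftrightarrow> ?k\<^sup>2 \<le> 4 * ?q (p - z) * (norm v)\<^sup>2" for p
  proof
    assume "\<exists>h. h \<ge> 0 \<and> ?k\<^sup>2 \<le> (h * norm v)\<^sup>2 \<and> h\<^sup>2 = 4 * ?q (p - z)"
    then obtain h where "?k\<^sup>2 \<le> (h * norm v)\<^sup>2" "h\<^sup>2 = 4 * ?q (p - z)" by blast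
    then show "?k\<^sup>2 \<le> 4 * ?q (p - z) * (norm v)\<^sup>2" by (simp add: power_mult_distrib)
  next
    assume k: "?k\<^sup>2 \<le> 4 * ?q (p - z) * (norm v)\<^sup>2"
    define h where "h = sqrt (4 * ?q (p - z))"
    have "h\<^sup>2 = 4 * ?q (p - z)" "h \<ge> 0"
      using chord_form_nonneg[OF assms(2), of "p - z"] by (simp_all add: h_def)
    moreover from this k have "?k\<^sup>2 \<le> (h * norm v)\<^sup>2" by (simp add: power_mult_distrib)
    ultimately show "\<exists>h. h \<ge> 0 \<and> ?k\<^sup>2 \<le> (h * norm v)\<^sup>2 \<and> h\<^sup>2 = 4 * ?q (p - z)"
      by blast
  qed
  then show ?thesis
    unfolding rectangle_locus_has_chord has_chord_parallel_iff[OF assms(1)] has_chord_crossing_iff[OF assms(2)]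
    by blast
qed

lemma rectangle_locus_parallel_crossing:
  assumes "v \<noteq> 0" "cross2 e f \<noteq> 0"
  obtains a b c where "a > 0"
    "rectangle_locus (line_through P v) (line_through Q v) (line_through z e) (line_through z f)
      = (\<lambda>t. midpoint P Q + t *\<^sub>R v) ` {t. 0 \<le> a * t\<^sup>2 + b * t + c}"
proof -
  let ?q = "chord_form e f"
  define m y k where "m = midpoint P Q" and "y = midpoint P Q - z" and "k = cross2 v (P - Q)"
  define a b c where "a = 4 * (norm v)\<^sup>2 * ?q v"
    and "b = 4 * (norm v)\<^sup>2 * (?q (y + v) - ?q y - ?q v)"
    and "c = 4 * (norm v)\<^sup>2 * ?q y - k\<^sup>2"
  have "?q v > 0"
    using chord_form_nonneg[OF assms(2), of v] chord_form_eq_0_iff[OF assms(2), of v] assms(1) by linarith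
  then have "a > 0" using assms(1) by (simp add: a_def)
  have expand: "4 * ?q (m + t *\<^sub>R v - z) * (norm v)\<^sup>2 - k\<^sup>2 = a * t\<^sup>2 + b * t + c" for t
  proof -
    have "m + t *\<^sub>R v - z = y + t *\<^sub>R v" by (simp add: m_def y_def algebra_simps)
    then show ?thesis
      unfolding a_def b_def c_def by (simp only: chord_form_add_scaleR) (simp add: algebra_simps)
  qed
  have "rectangle_locus (line_through P v) (line_through Q v) (line_through z e) (line_through z f)
      = (\<lambda>t. m + t *\<^sub>R v) ` {t. k\<^sup>2 \<le> 4 * ?q (m + t *\<^sub>R v - z) * (norm v)\<^sup>2}"
    unfolding rectangle_locus_parallel_crossing_eq[OF assms] m_def k_def mem_line_through by auto
  also have "{t. k\<^sup>2 \<le> 4 * ?q (m + t *\<^sub>R v - z) * (norm v)\<^sup>2} = {t. 0 \<le> a * t\<^sup>2 + b * t + c}"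
    by (simp add: expand[symmetric])
  finally show thesis using that \<open>a > 0\<close> m_def by blast
qed

lemma rectangle_locus_parallel_pair:
  assumes "parallel_lines L1 L3" "is_line L2" "is_line L4"
  defines "R \<equiv> rectangle_locus L1 L3 L2 L4"
  shows "is_line R \<or> is_line_minus_segment R \<or> (\<exists>x. R = {x}) \<or> R = {}"
proof -
  obtain P Q v where v: "v \<noteq> 0" "L1 = line_through P v" "L3 = line_through Q v"
    using assms(1) unfolding parallel_lines_def by blast
  show ?thesis
  proof (cases "parallel_lines L2 L4")
    case True
    then obtain P' Q' w where w: "w \<noteq> 0" "L2 = line_through P' w" "L4 = line_through Q' w"
      unfolding parallel_lines_def by blast
    then have "R = line_through (midpoint P Q) v \<inter> line_through (midpoint P' Q') w"
      unfolding R_def v(2,3) using rectangle_locus_parallel_parallel[OF v(1) w(1)] by simp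
    then show ?thesis
      using line_Int_line_cases[OF is_line_line_through[OF v(1), of "midpoint P Q"]
          is_line_line_through[OF w(1), of "midpoint P' Q'"]]
      by (elim disjE) simp_all
  next
    case False
    then obtain z e f where ef: "cross2 e f \<noteq> 0" and "L2 = line_through z e" "L4 = line_through z f"
      using crossing_lines_common_point[OF assms(2,3)] by blast
    then obtain a b c where "a > 0" "R = (\<lambda>t. midpoint P Q + t *\<^sub>R v) ` {t. 0 \<le> a * t\<^sup>2 + b * t + c}"
      using rectangle_locus_parallel_crossing[OF v(1) ef] unfolding R_def v(2,3) by blast
    then show ?thesis using quadratic_image_line_cases[OF v(1) \<open>a > 0\<close>, of "midpoint P Q" b c]
      by (elim disjE) simp_all
  qed
qed

lemma chord_form_eq_cases:
  assumes "cross2 e f \<noteq> 0" "cross2 e' f' \<noteq> 0" "chord_form e f = chord_form e' f'"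
  shows "(e \<bullet> f = 0 \<and> e' \<bullet> f' = 0) \<or>
    {line_through z e, line_through z f} = {line_through z e', line_through z f'}"
proof -
  define c c' where "c = 4 * (e \<bullet> f) / (cross2 e f)\<^sup>2" and "c' = 4 * (e' \<bullet> f') / (cross2 e' f')\<^sup>2"
  have c_eq: "c * (cross2 x f * cross2 e x) = c' * (cross2 x f' * cross2 e' x)" for x
    using fun_cong[OF assms(3), of x] unfolding chord_form_def c_def c'_def by simp
  show ?thesis
  proof (cases "c = 0")
    case True
    then have "c' * (cross2 e' f' * cross2 e' f') = 0"
      using c_eq[of "e' + f'"] by (simp add: cross2_bilinear)
    then have "c' = 0" using assms(2) by simp
    then show ?thesis using True assms(1,2) by (simp add: c_def c'_def)
  next
    case False
    have nonzero: "e \<noteq> 0" "f \<noteq> 0" "e' \<noteq> 0" "f' \<noteq> 0" using assms(1,2) by (auto simp: cross2_def)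
    have "cross2 e' f = 0 \<or> cross2 e e' = 0" "cross2 f' f = 0 \<or> cross2 e f' = 0"
      using c_eq[of e'] c_eq[of f'] False by simp_all
    then have "line_through z e' \<in> {line_through z e, line_through z f}"
      "line_through z f' \<in> {line_through z e, line_through z f}"
      using line_through_eq_iff nonzero cross2_eq_0_commute by auto
    moreover have "line_through z e' \<noteq> line_through z f'"
      using line_through_eq_iff nonzero assms(2) by simp
    ultimately show ?thesis by blast
  qed
qed

lemma rectangle_locus_eq_UNIV_imp_not_parallel:
  assumes "rectangle_locus L1 L3 L2 L4 = UNIV"
  shows "\<not> parallel_lines L1 L3"
proof
  assume "parallel_lines L1 L3"
  then obtain P Q v where v: "v \<noteq> 0" "L1 = line_through P v" "L3 = line_through Q v"
    unfolding parallel_lines_def by blast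
  then have "line_through (midpoint P Q) v = UNIV"
    using rectangle_locus_parallel_subset[OF v(1), of P Q L2 L4] assms by auto
  then show False using line_neq_UNIV is_line_line_through[OF v(1)] by blast
qed

lemma rectangle_locus_eq_UNIV_imp_orthogonal:
  assumes "is_line L1" "is_line L2" "is_line L3" "is_line L4" "{L1, L3} \<noteq> {L2, L4}"
    and univ: "rectangle_locus L1 L3 L2 L4 = UNIV"
  shows "orthogonal_lines L1 L3 \<and> orthogonal_lines L2 L4 \<and> (\<exists>x. x \<in> L1 \<and> x \<in> L2 \<and> x \<in> L3 \<and> x \<in> L4)"
proof -
  obtain z e f where ef: "cross2 e f \<noteq> 0" "L1 = line_through z e" "L3 = line_through z f"
    using crossing_lines_common_point[OF assms(1,3) rectangle_locus_eq_UNIV_imp_not_parallel[OF univ]] .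
  have "\<not> parallel_lines L2 L4"
    using rectangle_locus_eq_UNIV_imp_not_parallel[of L2 L4 L1 L3] univ
      rectangle_locus_swap_pairs[of L1 L3 L2 L4] by simp
  then obtain z' e' f' where ef': "cross2 e' f' \<noteq> 0" "L2 = line_through z' e'" "L4 = line_through z' f'"
    using crossing_lines_common_point[OF assms(2,4)] by blast
  have same: "chord_form e f (p - z) = chord_form e' f' (p - z')" for p
    using univ unfolding ef ef' rectangle_locus_crossing[OF ef(1) ef'(1)] by blast
  have "chord_form e' f' (z - z') = 0" using same[of z] by simp
  then have "z' = z" using chord_form_eq_0_iff[OF ef'(1)] by simp
  have "chord_form e f = chord_form e' f'"
  proof
    show "chord_form e f x = chord_form e' f' x" for x using same[of "x + z"] \<open>z' = z\<close> by simp
  qed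
  moreover have "{line_through z e, line_through z f} \<noteq> {line_through z e', line_through z f'}"
    using assms(5) ef ef' \<open>z' = z\<close> by simp
  ultimately have orth: "e \<bullet> f = 0 \<and> e' \<bullet> f' = 0"
    using chord_form_eq_cases[OF ef(1) ef'(1)] by blast
  have "e \<noteq> 0" "f \<noteq> 0" "e' \<noteq> 0" "f' \<noteq> 0" using ef(1) ef'(1) by (auto simp: cross2_def)
  then have "orthogonal_lines L1 L3" "orthogonal_lines L2 L4"
    unfolding orthogonal_lines_def using orth ef ef' by blast+
  moreover have "z \<in> L1 \<and> z \<in> L2 \<and> z \<in> L3 \<and> z \<in> L4" using ef ef' \<open>z' = z\<close> by simp
  ultimately show ?thesis by blast
qed

lemma rectangle_locus_orthogonal_concurrent_eq_UNIV:
  assumes "orthogonal_lines L1 L3" "orthogonal_lines L2 L4" "x \<in> L1" "x \<in> L2" "x \<in> L3" "x \<in> L4"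
  shows "rectangle_locus L1 L3 L2 L4 = UNIV"
proof -
  obtain v w where vw: "v \<noteq> 0" "w \<noteq> 0" "v \<bullet> w = 0" "L1 = line_through x v" "L3 = line_through x w"
    using orthogonal_lines_through[OF assms(1,3,5)] .
  obtain v' w' where vw': "v' \<noteq> 0" "w' \<noteq> 0" "v' \<bullet> w' = 0" "L2 = line_through x v'" "L4 = line_through x w'"
    using orthogonal_lines_through[OF assms(2,4,6)] .
  show ?thesis
    unfolding vw(4,5) vw'(4,5)
    using rectangle_locus_crossing[OF cross2_orthogonal_neq_0[OF vw(1-3)] cross2_orthogonal_neq_0[OF vw'(1-3)]]
    by (simp add: chord_form_orthogonal vw(3) vw'(3))
qed

lemma rectangle_locus_crossing_same_form:
  assumes "cross2 e f \<noteq> 0" "cross2 e' f' \<noteq> 0" "chord_form e f = chord_form e' f'" "z \<noteq> z'"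
  shows "is_line (rectangle_locus (line_through z e) (line_through z f) (line_through z' e') (line_through z' f'))"
  using rectangle_locus_crossing[OF assms(1,2)] chord_form_bisector_is_line[OF assms(1,4)] assms(3)
  by simp

lemma rectangle_locus_orthogonal_pairs:
  assumes "orthogonal_lines L1 L3" "orthogonal_lines L2 L4" "L1 \<inter> L3 \<noteq> L2 \<inter> L4"
  shows "is_line (rectangle_locus L1 L3 L2 L4)"
proof -
  obtain z v w where vw: "v \<bullet> w = 0" "cross2 v w \<noteq> 0" "L1 = line_through z v" "L3 = line_through z w"
    using orthogonal_lines_crossing[OF assms(1)] .
  obtain z' v' w' where vw': "v' \<bullet> w' = 0" "cross2 v' w' \<noteq> 0" "L2 = line_through z' v'" "L4 = line_through z' w'"
    using orthogonal_lines_crossing[OF assms(2)] .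
  have "z \<noteq> z'"
    using assms(3) line_through_Int_crossing[OF vw(2)] line_through_Int_crossing[OF vw'(2)] vw vw' by auto
  moreover have "chord_form v w = chord_form v' w'"
    using chord_form_orthogonal[OF vw(1)] chord_form_orthogonal[OF vw'(1)] by auto
  ultimately show ?thesis
    unfolding vw(3,4) vw'(3,4) using rectangle_locus_crossing_same_form[OF vw(2) vw'(2)] by blast
qed

lemma rectangle_locus_translated_pair:
  assumes "is_line L1" "is_line L3" "\<not> parallel_lines L1 L3" "L1 \<inter> L3 \<noteq> L2 \<inter> L4"
    and translate: "{translate_set u L1, translate_set u L3} = {L2, L4}"
  shows "is_line (rectangle_locus L1 L3 L2 L4)"
proof -
  obtain z e f where ef: "cross2 e f \<noteq> 0" "L1 = line_through z e" "L3 = line_through z f"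
    using crossing_lines_common_point[OF assms(1-3)] .
  have pairs: "{line_through (z + u) e, line_through (z + u) f} = {L2, L4}"
    using translate unfolding ef translate_set_line_through .
  have "u \<noteq> 0"
  proof
    assume "u = 0"
    then have "{L1, L3} = {L2, L4}" using pairs ef by simp
    then have "L1 \<inter> L3 = L2 \<inter> L4" by (auto simp: doubleton_eq_iff)
    then show False using assms(4) by simp
  qed
  then have "is_line (rectangle_locus L1 L3 (line_through (z + u) e) (line_through (z + u) f))"
    unfolding ef(2,3) by (intro rectangle_locus_crossing_same_form[OF ef(1) ef(1)]) simp_all
  moreover have "rectangle_locus L1 L3 (line_through (z + u) e) (line_through (z + u) f)
      = rectangle_locus L1 L3 L2 L4"
    using pairs rectangle_locus_swap_second[of L1 L3 L2 L4] by (auto simp: doubleton_eq_iff)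
  ultimately show ?thesis by simp
qed

lemma rectangle_locus_one_pair_parallel:
  assumes "is_line L1" "is_line L2" "is_line L3" "is_line L4"
    and "parallel_lines L1 L3 \<or> parallel_lines L2 L4"
  defines "R \<equiv> rectangle_locus L1 L3 L2 L4"
  shows "is_line R \<or> is_line_minus_segment R \<or> (\<exists>x. R = {x}) \<or> R = {}"
  using assms(5)
proof
  assume "parallel_lines L1 L3"
  then show ?thesis unfolding R_def by (rule rectangle_locus_parallel_pair[OF _ assms(2,4)])
next
  assume "parallel_lines L2 L4"
  from rectangle_locus_parallel_pair[OF this assms(1,3)] show ?thesis
    unfolding R_def rectangle_locus_swap_pairs[of L1 L3 L2 L4] .
qed

lemma rectangle_locus_eq_UNIV_iff:
  assumes "is_line L1" "is_line L2" "is_line L3" "is_line L4" "{L1, L3} \<noteq> {L2, L4}"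
  shows "rectangle_locus L1 L3 L2 L4 = UNIV \<longleftrightarrow>
    orthogonal_lines L1 L3 \<and> orthogonal_lines L2 L4 \<and> (\<exists>x. x \<in> L1 \<and> x \<in> L2 \<and> x \<in> L3 \<and> x \<in> L4)"
proof
  assume "rectangle_locus L1 L3 L2 L4 = UNIV"
  then show "orthogonal_lines L1 L3 \<and> orthogonal_lines L2 L4 \<and> (\<exists>x. x \<in> L1 \<and> x \<in> L2 \<and> x \<in> L3 \<and> x \<in> L4)"
    by (rule rectangle_locus_eq_UNIV_imp_orthogonal[OF assms])
next
  assume "orthogonal_lines L1 L3 \<and> orthogonal_lines L2 L4 \<and> (\<exists>x. x \<in> L1 \<and> x \<in> L2 \<and> x \<in> L3 \<and> x \<in> L4)"
  then show "rectangle_locus L1 L3 L2 L4 = UNIV"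
    using rectangle_locus_orthogonal_concurrent_eq_UNIV by blast
qed

lemma rectangle_locus_is_line:
  assumes "is_line L1" "is_line L2" "is_line L3" "is_line L4"
    and np: "\<not> parallel_lines L1 L3" "\<not> parallel_lines L2 L4" and meet: "L1 \<inter> L3 \<noteq> L2 \<inter> L4"
    and "(orthogonal_lines L1 L3 \<and> orthogonal_lines L2 L4) \<or>
      (\<exists>u. {translate_set u L1, translate_set u L3} = {L2, L4}) \<or>
      (\<exists>u. {translate_set u L2, translate_set u L4} = {L1, L3})"
  shows "is_line (rectangle_locus L1 L3 L2 L4)"
proof -
  from assms(8) consider "orthogonal_lines L1 L3" "orthogonal_lines L2 L4"
    | u where "{translate_set u L1, translate_set u L3} = {L2, L4}"
    | u where "{translate_set u L2, translate_set u L4} = {L1, L3}"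
    by blast
  then show ?thesis
  proof cases
    case 1
    then show ?thesis using rectangle_locus_orthogonal_pairs meet by blast
  next
    case 2
    then show ?thesis using rectangle_locus_translated_pair[OF assms(1,3) np(1) meet] by blast
  next
    case 3
    have "L2 \<inter> L4 \<noteq> L1 \<inter> L3" using meet by auto
    from rectangle_locus_translated_pair[OF assms(2,4) np(2) this 3] show ?thesis
      unfolding rectangle_locus_swap_pairs[of L1 L3 L2 L4] .
  qed
qed

theorem proposition4p4:
  fixes L1 L2 L3 L4 :: "point set"
  assumes "is_line L1" "is_line L2" "is_line L3" "is_line L4"
    and "L1 \<noteq> L3" "L2 \<noteq> L4"
    and "{L1, L3} \<noteq> {L2, L4}"
  shows
    "(parallel_lines L1 L3 \<or> parallel_lines L2 L4 \<longrightarrow>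
        is_line (rectangle_locus L1 L3 L2 L4)
      \<or> (\<exists>L a b. is_line L \<and> a \<in> L \<and> b \<in> L \<and> a \<noteq> b \<and>
            rectangle_locus L1 L3 L2 L4 = L - open_segment a b)
      \<or> (\<exists>x. rectangle_locus L1 L3 L2 L4 = {x})
      \<or> rectangle_locus L1 L3 L2 L4 = {})
   \<and> (rectangle_locus L1 L3 L2 L4 = UNIV \<longleftrightarrow>
        orthogonal_lines L1 L3 \<and> orthogonal_lines L2 L4 \<and>
        (\<exists>x. x \<in> L1 \<and> x \<in> L2 \<and> x \<in> L3 \<and> x \<in> L4))
   \<and> (\<not> parallel_lines L1 L3 \<and> \<not> parallel_lines L2 L4 \<and> L1 \<inter> L3 \<noteq> L2 \<inter> L4 \<and>
        ((orthogonal_lines L1 L3 \<and> orthogonal_lines L2 L4) \<or>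
         (\<exists>v. {translate_set v L1, translate_set v L3} = {L2, L4}) \<or>
         (\<exists>v. {translate_set v L2, translate_set v L4} = {L1, L3}))
      \<longrightarrow> is_line (rectangle_locus L1 L3 L2 L4))"
  using rectangle_locus_one_pair_parallel[OF assms(1-4)] rectangle_locus_eq_UNIV_iff[OF assms(1-4,7)]
    rectangle_locus_is_line[OF assms(1-4)]
  by blast

end
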